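(* Let $w\in\mathbb{Q}^{V_+}_{\ge0}$, $b\in\mathbb{Z}^{V_+}_{\ge0}$, $\emptyset\ne S\subseteq V_+$ and $k'\in\mathbb{Z}_{>0}$, and assume $k_\xi(S)-k'\le b(S)$ for every $\xi\in[N]$. For each $\xi$, write $S=\{v_1,\dots,v_\ell\}$ with $w_{v_1}\le\dots\le w_{v_\ell}$, let $j\in[\ell]$ be the smallest index with $k_\xi(S)-k'\le\sum_{i\in[j]}b_{v_i}$, and set $\bar\alpha^\xi_S=\mathbb{I}(k_\xi(S)>k')\,w_{v_j}$ and $\bar\beta^\xi_v=\mathbb{I}(v\in\{v_1,\dots,v_{j-1}\})(w_v-w_{v_j})$ for $v\in V_+$. Define $\hat\alpha^\xi_{S'}=\mathbb{I}(S'=S)\,p_\xi\bar\alpha^\xi_S$ for all $\emptyset\ne S'\subseteq V_+$, $\xi\in[N]$, and $\hat\beta^\xi_v=p_\xi\bar\beta^\xi_v$. Then $(\hat\alpha,\hat\beta)\in\mathcal{A}$, and for every $\bar x\in\{x\in\mathcal{X}:x(E(S))\le|S|-k'\}$ every $\theta\in\operatorname{proj}_\theta(\Gamma(\bar x,\hat\alpha,\hat\beta))$ satisfies $$\theta(S)\ge\mathcal{L}^*(S,k')\cdot\big(1+\bar x(E(S))-|S|+k'\big).$$ In particular, if $x(E(S))\le|S|-k'$ is valid for $\mathcal{P}$, then the inequality $\theta(S)\ge\mathcal{L}^*(S,k')(1+x(E(S))-|S|+k')$ (with $x$ free) is valid for $\mathcal{P}$.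
   Context: $G=(V,E)$ complete undirected graph, $V=\{0\}\cup V_+$ ($V_+$ customers), edge costs $c\in\mathbb{Q}^E_{\ge0}$; capacity $C>0$; scenarios $\xi\in[N]$ with demands $d^\xi\in\mathbb{Q}^{V_+}_{\ge0}$ ($d^\xi(v)\le C$) and probabilities $p_\xi\ge0$, $\sum_\xi p_\xi=1$. $f(S)=\sum_{i\in S}f(i)$; $k_\xi(S)=\lceil d^\xi(S)/C\rceil$; $\bar d=\sum_\xi p_\xi d^\xi$; $\mathbb{I}$ is the indicator; $E(S)$ edges with both ends in $S$, $\delta(S)$ edges with exactly one end in $S$. $\mathcal{X}$ is one of $\mathcal{X}_{\mathrm{sub}}=\{x\in[0,2]^E: x(\delta(v))=2\ \forall v\in V_+,\ x(E(S))\le|S|-1\ \forall\emptyset\ne S\subseteq V_+\}$ or $\mathcal{X}_{\mathrm{cvrp}}=\mathcal{X}_{\mathrm{sub}}\cap\{x:x(\delta(0))=2k,\ x(E(S))\le|S|-\lceil\bar d(S)/C\rceil\ \forall \emptyset\ne S\subseteq V_+\}$ ($k$ a given positive integer). Vectors $y\in\mathbb{R}^{[N]\times V_+}$ have entries $y^\xi_v$; $[\mathbf 0,b]^N=\{y:0\le y^\xi_v\le b_v\}$. Multipliers: $\alpha=(\alpha^\xi_S)_{\xi\in[N],\emptyset\ne S\subseteq V_+}\ge0$, $\beta=(\beta^\xi_v)\le0$. Define $\nu(\alpha,\beta)=\sum_\xi\sum_S\alpha^\xi_S(k_\xi(S)-|S|)+\sum_\xi\sum_{v}\beta^\xi_v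 b_v$. $\mathcal{A}$ is the set of $(\alpha,\beta)$ with $\alpha\ge0$, $\beta\le0$ and $\beta^\xi_v+\sum_{S\ni v}\alpha^\xi_S\le0$ for all $\xi$ and all $v$ with $w_v=0$. For $\bar x\in\mathcal{X}$, $\Gamma(\bar x,\alpha,\beta)$ is the set of $(\theta,y)\in\mathbb{R}^{V_+}_{\ge0}\times[\mathbf 0,b]^N$ with $\sum_\xi\sum_v(\beta^\xi_v+\sum_{S\ni v}\alpha^\xi_S)y^\xi_v\ge\sum_\xi\sum_S\alpha^\xi_S\bar x(E(S))+\nu(\alpha,\beta)$ and $\theta_v\ge\sum_\xi p_\xi w_v y^\xi_v$ for all $v\in V_+$; $\operatorname{proj}_\theta$ is its projection onto $\theta$. $\mathcal{P}=\{(x,\theta):x\in\mathcal{X},\ \theta\in\operatorname{proj}_\theta(\widehat{\mathrm{SRI}}(x))\}$, where $\widehat{\mathrm{SRI}}(x)$ is the set of $(\theta,y)\in\mathbb{R}^{V_+}_{\ge0}\times[\mathbf 0,b]^N$ with $y^\xi(S)\ge k_\xi(S)+x(E(S))-|S|$ for all $\emptyset\ne S\subseteq V_+$, $\xi\in[N]$, and $\theta_v\ge\sum_\xi p_\xi w_v y^\xi_v$ for all $v$. Finally $\mathcal{L}^*(S,k')=\sum_\xi p_\xi\mathcal{L}^*_\xi(S,k')$ where $\mathcal{L}^*_\xi(S,k')=\min\{\sum_{v\in V_+}w_vy_v: y(S)\ge k_\xi(S)-k',\ y_v\le b_v\ \forall v\in V_+,\ y\ge0\}$. *)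

theory Defs
  imports "HOL-Analysis.Analysis"
begin

(* Vertices have type 'v; the depot is dep, the customers Vp, V = insert dep Vp.
   Edges of the complete undirected graph on a vertex set are its 2-element subsets.
   Scenarios are indexed by {1..N}. *)

definition edges :: "'v set \<Rightarrow> 'v set set" where
  "edges A = {e. e \<subseteq> A \<and> card e = 2}"

definition xE :: "('v set \<Rightarrow> real) \<Rightarrow> 'v set \<Rightarrow> real" where
  "xE x S = sum x (edges S)"

definition xdelta :: "'v set \<Rightarrow> ('v set \<Rightarrow> real) \<Rightarrow> 'v \<Rightarrow> real" where
  "xdelta V x v = sum x {e \<in> edges V. v \<in> e}"

definition subsets :: "'v set \<Rightarrow> 'v set set" where
  "subsets Vp = {S. S \<subseteq> Vp \<and> S \<noteq> {}}"

definition kxi :: "real \<Rightarrow> (nat \<Rightarrow> 'v \<Rightarrow> real) \<Rightarrow> nat \<Rightarrow> 'v set \<Rightarrow> int" where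
  "kxi C d \<xi> S = \<lceil>sum (d \<xi>) S / C\<rceil>"

definition dbar :: "nat \<Rightarrow> (nat \<Rightarrow> real) \<Rightarrow> (nat \<Rightarrow> 'v \<Rightarrow> real) \<Rightarrow> 'v set \<Rightarrow> real" where
  "dbar N p d S = (\<Sum>\<xi>\<in>{1..N}. p \<xi> * sum (d \<xi>) S)"

definition X_sub :: "'v \<Rightarrow> 'v set \<Rightarrow> ('v set \<Rightarrow> real) set" where
  "X_sub dep Vp = {x.
     (\<forall>e\<in>edges (insert dep Vp). 0 \<le> x e \<and> x e \<le> 2)
   \<and> (\<forall>v\<in>Vp. xdelta (insert dep Vp) x v = 2)
   \<and> (\<forall>S\<in>subsets Vp. xE x S \<le> real (card S) - 1)}"

definition X_cvrp :: "'v \<Rightarrow> 'v set \<Rightarrow> nat \<Rightarrow> (nat \<Rightarrow> real) \<Rightarrow> (nat \<Rightarrow> 'v \<Rightarrow> real)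
    \<Rightarrow> real \<Rightarrow> nat \<Rightarrow> ('v set \<Rightarrow> real) set" where
  "X_cvrp dep Vp N p d C k = X_sub dep Vp \<inter> {x.
     xdelta (insert dep Vp) x dep = 2 * real k
   \<and> (\<forall>S\<in>subsets Vp. xE x S \<le> real (card S) - of_int \<lceil>dbar N p d S / C\<rceil>)}"

definition nu :: "'v set \<Rightarrow> nat \<Rightarrow> (nat \<Rightarrow> 'v \<Rightarrow> real) \<Rightarrow> real \<Rightarrow> ('v \<Rightarrow> nat)
    \<Rightarrow> (nat \<Rightarrow> 'v set \<Rightarrow> real) \<Rightarrow> (nat \<Rightarrow> 'v \<Rightarrow> real) \<Rightarrow> real" where
  "nu Vp N d C b \<alpha> \<beta> =
     (\<Sum>\<xi>\<in>{1..N}. \<Sum>S\<in>subsets Vp. \<alpha> \<xi> S * (of_int (kxi C d \<xi> S) - real (card S)))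
   + (\<Sum>\<xi>\<in>{1..N}. \<Sum>v\<in>Vp. \<beta> \<xi> v * real (b v))"

definition inA :: "'v set \<Rightarrow> nat \<Rightarrow> ('v \<Rightarrow> real)
    \<Rightarrow> (nat \<Rightarrow> 'v set \<Rightarrow> real) \<Rightarrow> (nat \<Rightarrow> 'v \<Rightarrow> real) \<Rightarrow> bool" where
  "inA Vp N w \<alpha> \<beta> \<longleftrightarrow>
     (\<forall>\<xi>\<in>{1..N}. \<forall>S\<in>subsets Vp. 0 \<le> \<alpha> \<xi> S)
   \<and> (\<forall>\<xi>\<in>{1..N}. \<forall>v\<in>Vp. \<beta> \<xi> v \<le> 0)
   \<and> (\<forall>\<xi>\<in>{1..N}. \<forall>v\<in>Vp. w v = 0 \<longrightarrow>
        \<beta> \<xi> v + (\<Sum>S\<in>{S\<in>subsets Vp. v \<in> S}. \<alpha> \<xi> S) \<le> 0)"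

definition Gamma :: "'v set \<Rightarrow> nat \<Rightarrow> (nat \<Rightarrow> real) \<Rightarrow> (nat \<Rightarrow> 'v \<Rightarrow> real) \<Rightarrow> real
    \<Rightarrow> ('v \<Rightarrow> real) \<Rightarrow> ('v \<Rightarrow> nat) \<Rightarrow> ('v set \<Rightarrow> real)
    \<Rightarrow> (nat \<Rightarrow> 'v set \<Rightarrow> real) \<Rightarrow> (nat \<Rightarrow> 'v \<Rightarrow> real)
    \<Rightarrow> (('v \<Rightarrow> real) \<times> (nat \<Rightarrow> 'v \<Rightarrow> real)) set" where
  "Gamma Vp N p d C w b xbar \<alpha> \<beta> = {(\<theta>, y).
     (\<forall>v\<in>Vp. 0 \<le> \<theta> v)
   \<and> (\<forall>\<xi>\<in>{1..N}. \<forall>v\<in>Vp. 0 \<le> y \<xi> v \<and> y \<xi> v \<le> real (b v))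
   \<and> (\<Sum>\<xi>\<in>{1..N}. \<Sum>v\<in>Vp. (\<beta> \<xi> v + (\<Sum>S\<in>{S\<in>subsets Vp. v \<in> S}. \<alpha> \<xi> S)) * y \<xi> v)
       \<ge> (\<Sum>\<xi>\<in>{1..N}. \<Sum>S\<in>subsets Vp. \<alpha> \<xi> S * xE xbar S) + nu Vp N d C b \<alpha> \<beta>
   \<and> (\<forall>v\<in>Vp. \<theta> v \<ge> (\<Sum>\<xi>\<in>{1..N}. p \<xi> * w v * y \<xi> v))}"

definition proj_theta :: "('a \<times> 'b) set \<Rightarrow> 'a set" where
  "proj_theta G = {\<theta>. \<exists>y. (\<theta>, y) \<in> G}"

definition SRI_hat :: "'v set \<Rightarrow> nat \<Rightarrow> (nat \<Rightarrow> real) \<Rightarrow> (nat \<Rightarrow> 'v \<Rightarrow> real) \<Rightarrow> real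
    \<Rightarrow> ('v \<Rightarrow> real) \<Rightarrow> ('v \<Rightarrow> nat) \<Rightarrow> ('v set \<Rightarrow> real)
    \<Rightarrow> (('v \<Rightarrow> real) \<times> (nat \<Rightarrow> 'v \<Rightarrow> real)) set" where
  "SRI_hat Vp N p d C w b x = {(\<theta>, y).
     (\<forall>v\<in>Vp. 0 \<le> \<theta> v)
   \<and> (\<forall>\<xi>\<in>{1..N}. \<forall>v\<in>Vp. 0 \<le> y \<xi> v \<and> y \<xi> v \<le> real (b v))
   \<and> (\<forall>S\<in>subsets Vp. \<forall>\<xi>\<in>{1..N}.
        sum (y \<xi>) S \<ge> of_int (kxi C d \<xi> S) + xE x S - real (card S))
   \<and> (\<forall>v\<in>Vp. \<theta> v \<ge> (\<Sum>\<xi>\<in>{1..N}. p \<xi> * w v * y \<xi> v))}"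

definition Pset :: "('v set \<Rightarrow> real) set \<Rightarrow> 'v set \<Rightarrow> nat \<Rightarrow> (nat \<Rightarrow> real) \<Rightarrow> (nat \<Rightarrow> 'v \<Rightarrow> real)
    \<Rightarrow> real \<Rightarrow> ('v \<Rightarrow> real) \<Rightarrow> ('v \<Rightarrow> nat) \<Rightarrow> (('v set \<Rightarrow> real) \<times> ('v \<Rightarrow> real)) set" where
  "Pset X Vp N p d C w b = {(x, \<theta>). x \<in> X \<and> \<theta> \<in> proj_theta (SRI_hat Vp N p d C w b x)}"

definition Lstar_xi :: "'v set \<Rightarrow> (nat \<Rightarrow> 'v \<Rightarrow> real) \<Rightarrow> real \<Rightarrow> ('v \<Rightarrow> real) \<Rightarrow> ('v \<Rightarrow> nat)
    \<Rightarrow> nat \<Rightarrow> 'v set \<Rightarrow> int \<Rightarrow> real" where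
  "Lstar_xi Vp d C w b \<xi> S k' = Inf {(\<Sum>v\<in>Vp. w v * y v) | y.
      sum y S \<ge> of_int (kxi C d \<xi> S - k') \<and> (\<forall>v\<in>Vp. 0 \<le> y v \<and> y v \<le> real (b v))}"

definition Lstar :: "'v set \<Rightarrow> nat \<Rightarrow> (nat \<Rightarrow> real) \<Rightarrow> (nat \<Rightarrow> 'v \<Rightarrow> real) \<Rightarrow> real
    \<Rightarrow> ('v \<Rightarrow> real) \<Rightarrow> ('v \<Rightarrow> nat) \<Rightarrow> 'v set \<Rightarrow> int \<Rightarrow> real" where
  "Lstar Vp N p d C w b S k' = (\<Sum>\<xi>\<in>{1..N}. p \<xi> * Lstar_xi Vp d C w b \<xi> S k')"

(* Construction of the multipliers in the theorem.  ord xi is the chosen ordering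
   v_1..v_l of S (by nondecreasing w) for scenario xi. *)
definition jidx :: "real \<Rightarrow> (nat \<Rightarrow> 'v \<Rightarrow> real) \<Rightarrow> ('v \<Rightarrow> nat) \<Rightarrow> (nat \<Rightarrow> nat \<Rightarrow> 'v)
    \<Rightarrow> 'v set \<Rightarrow> int \<Rightarrow> nat \<Rightarrow> nat" where
  "jidx C d b ord S k' \<xi> = (LEAST j. 1 \<le> j \<and> j \<le> card S
       \<and> kxi C d \<xi> S - k' \<le> (\<Sum>i\<in>{1..j}. int (b (ord \<xi> i))))"

definition alpha_bar :: "real \<Rightarrow> (nat \<Rightarrow> 'v \<Rightarrow> real) \<Rightarrow> ('v \<Rightarrow> real) \<Rightarrow> ('v \<Rightarrow> nat)
    \<Rightarrow> (nat \<Rightarrow> nat \<Rightarrow> 'v) \<Rightarrow> 'v set \<Rightarrow> int \<Rightarrow> nat \<Rightarrow> real" where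
  "alpha_bar C d w b ord S k' \<xi> =
     (if kxi C d \<xi> S > k' then w (ord \<xi> (jidx C d b ord S k' \<xi>)) else 0)"

definition beta_bar :: "real \<Rightarrow> (nat \<Rightarrow> 'v \<Rightarrow> real) \<Rightarrow> ('v \<Rightarrow> real) \<Rightarrow> ('v \<Rightarrow> nat)
    \<Rightarrow> (nat \<Rightarrow> nat \<Rightarrow> 'v) \<Rightarrow> 'v set \<Rightarrow> int \<Rightarrow> nat \<Rightarrow> 'v \<Rightarrow> real" where
  "beta_bar C d w b ord S k' \<xi> v =
     (if v \<in> ord \<xi> ` {1..<jidx C d b ord S k' \<xi>}
      then w v - w (ord \<xi> (jidx C d b ord S k' \<xi>)) else 0)"

definition alpha_hat :: "(nat \<Rightarrow> real) \<Rightarrow> real \<Rightarrow> (nat \<Rightarrow> 'v \<Rightarrow> real) \<Rightarrow> ('v \<Rightarrow> real) \<Rightarrow> ('v \<Rightarrow> nat)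
    \<Rightarrow> (nat \<Rightarrow> nat \<Rightarrow> 'v) \<Rightarrow> 'v set \<Rightarrow> int \<Rightarrow> nat \<Rightarrow> 'v set \<Rightarrow> real" where
  "alpha_hat p C d w b ord S k' \<xi> S' =
     (if S' = S then p \<xi> * alpha_bar C d w b ord S k' \<xi> else 0)"

definition beta_hat :: "(nat \<Rightarrow> real) \<Rightarrow> real \<Rightarrow> (nat \<Rightarrow> 'v \<Rightarrow> real) \<Rightarrow> ('v \<Rightarrow> real) \<Rightarrow> ('v \<Rightarrow> nat)
    \<Rightarrow> (nat \<Rightarrow> nat \<Rightarrow> 'v) \<Rightarrow> 'v set \<Rightarrow> int \<Rightarrow> nat \<Rightarrow> 'v \<Rightarrow> real" where
  "beta_hat p C d w b ord S k' \<xi> v = p \<xi> * beta_bar C d w b ord S k' \<xi> v"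

end

theory Submission
  imports Defs
begin

(* Fix a scenario xi and write K = k_xi(S) - k'.  The multipliers (alpha_bar, beta_bar) form an
   optimal dual solution of the covering LP defining L*_xi(S, k'): filling the customers of S in
   order of increasing weight up to their capacities b, and stopping at the threshold customer v_j,
   gives a feasible y of cost D = alpha_bar K + sum_v beta_bar_v b_v (complementary slackness), and
   D >= alpha_bar.  Aggregating the constraint of Gamma with the multipliers p_xi alpha_bar and
   p_xi beta_bar, and using beta_bar_v + alpha_bar <= w_v on S, yields
   theta(S) >= sum_xi p_xi (D_xi + alpha_bar_xi (t - 1)),  where t = 1 + x(E(S)) - |S| + k' <= 1.
   For 0 <= t <= 1 the right-hand side dominates L*(S, k') t, because it is affine in t and
   dominates it at t = 0 and t = 1; for t < 0 the claim is trivial.  Since the constraints of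
   SRI_hat aggregate to that of Gamma for any multipliers in A, the bound also holds on P. *)

lemma finite_subsets: "finite Vp \<Longrightarrow> finite (subsets Vp)"
  by (rule finite_subset[of _ "Pow Vp"]) (auto simp: subsets_def)

lemma least_prefix_covering:
  fixes f :: "nat \<Rightarrow> nat" and K :: int
  assumes l: "1 \<le> l" and covered: "K \<le> (\<Sum>i\<in>{1..l}. int (f i))"
    and j: "j = (LEAST j. 1 \<le> j \<and> j \<le> l \<and> K \<le> (\<Sum>i\<in>{1..j}. int (f i)))"
  shows "1 \<le> j" and "j \<le> l" and "K \<le> (\<Sum>i\<in>{1..j}. int (f i))"
    and "0 < K \<Longrightarrow> (\<Sum>i\<in>{1..<j}. int (f i)) < K"
    and "K \<le> 0 \<Longrightarrow> j = 1"
proof -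
  let ?P = "\<lambda>j. 1 \<le> j \<and> j \<le> l \<and> K \<le> (\<Sum>i\<in>{1..j}. int (f i))"
  have "?P l" using l covered by simp
  then have "?P j" unfolding j by (rule LeastI)
  then show j1: "1 \<le> j" and jl: "j \<le> l" and "K \<le> (\<Sum>i\<in>{1..j}. int (f i))" by auto
  show "(\<Sum>i\<in>{1..<j}. int (f i)) < K" if "0 < K"
  proof (cases "j = 1")
    case False
    then have "j - 1 < j" using j1 by simp
    then have "\<not> ?P (j - 1)" unfolding j by (rule not_less_Least)
    moreover have "{1..j - 1} = {1..<j}" using j1 by auto
    ultimately show ?thesis using j1 jl False by (simp add: not_le, arith)
  qed (use that in simp)
  show "j = 1" if "K \<le> 0"
  proof -
    have "?P 1" using l that by (simp add: sum_nonneg)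
    then have "j \<le> 1" unfolding j by (rule Least_le)
    then show ?thesis using j1 by simp
  qed
qed

lemma sum_subsets_containing_swap:
  fixes \<alpha> :: "'v set \<Rightarrow> real"
  assumes "finite Vp"
  shows "(\<Sum>v\<in>Vp. (\<Sum>S\<in>{S\<in>subsets Vp. v \<in> S}. \<alpha> S) * y v) = (\<Sum>S\<in>subsets Vp. \<alpha> S * sum y S)"
proof -
  note fin_subsets = finite_subsets[OF assms]
  have "(\<Sum>v\<in>Vp. (\<Sum>S\<in>{S\<in>subsets Vp. v \<in> S}. \<alpha> S) * y v)
      = (\<Sum>v\<in>Vp. \<Sum>S\<in>subsets Vp. if v \<in> S then \<alpha> S * y v else 0)"
    by (simp add: sum.inter_filter[OF fin_subsets, symmetric] sum_distrib_right)
  also have "\<dots> = (\<Sum>S\<in>subsets Vp. \<Sum>v\<in>Vp. if v \<in> S then \<alpha> S * y v else 0)"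
    by (rule sum.swap)
  also have "\<dots> = (\<Sum>S\<in>subsets Vp. \<alpha> S * sum y S)"
  proof (rule sum.cong)
    fix S assume "S \<in> subsets Vp"
    then have "Vp \<inter> S = S" by (auto simp: subsets_def)
    then show "(\<Sum>v\<in>Vp. if v \<in> S then \<alpha> S * y v else 0) = \<alpha> S * sum y S"
      by (simp add: sum.inter_restrict[OF assms, symmetric] sum_distrib_left)
  qed simp
  finally show ?thesis .
qed

lemma Gamma_constraint_slack:
  assumes "finite Vp"
  shows "(\<Sum>\<xi>\<in>{1..N}. \<Sum>v\<in>Vp. (\<beta> \<xi> v + (\<Sum>S\<in>{S\<in>subsets Vp. v \<in> S}. \<alpha> \<xi> S)) * y \<xi> v)
      - ((\<Sum>\<xi>\<in>{1..N}. \<Sum>S\<in>subsets Vp. \<alpha> \<xi> S * xE x S) + nu Vp N d C b \<alpha> \<beta>)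
    = (\<Sum>\<xi>\<in>{1..N}. (\<Sum>S\<in>subsets Vp.
          \<alpha> \<xi> S * (sum (y \<xi>) S - (of_int (kxi C d \<xi> S) + xE x S - real (card S))))
        + (\<Sum>v\<in>Vp. \<beta> \<xi> v * (y \<xi> v - real (b v))))"
proof -
  have "(\<Sum>\<xi>\<in>{1..N}. \<Sum>v\<in>Vp. (\<beta> \<xi> v + (\<Sum>S\<in>{S\<in>subsets Vp. v \<in> S}. \<alpha> \<xi> S)) * y \<xi> v)
      = (\<Sum>\<xi>\<in>{1..N}. (\<Sum>v\<in>Vp. \<beta> \<xi> v * y \<xi> v) + (\<Sum>S\<in>subsets Vp. \<alpha> \<xi> S * sum (y \<xi>) S))"
    by (simp add: distrib_right sum.distrib sum_subsets_containing_swap[OF assms])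
  then show ?thesis
    by (simp add: nu_def ring_distribs sum.distrib sum_subtractf)
qed

lemma SRI_hat_subset_Gamma:
  assumes "finite Vp" and "inA Vp N w \<alpha> \<beta>"
  shows "SRI_hat Vp N p d C w b x \<subseteq> Gamma Vp N p d C w b x \<alpha> \<beta>"
proof safe
  fix \<theta> y assume sri: "(\<theta>, y) \<in> SRI_hat Vp N p d C w b x"
  have "0 \<le> (\<Sum>\<xi>\<in>{1..N}. (\<Sum>S\<in>subsets Vp.
          \<alpha> \<xi> S * (sum (y \<xi>) S - (of_int (kxi C d \<xi> S) + xE x S - real (card S))))
        + (\<Sum>v\<in>Vp. \<beta> \<xi> v * (y \<xi> v - real (b v))))"
  proof (intro sum_nonneg add_nonneg_nonneg)
    fix \<xi> assume \<xi>: "\<xi> \<in> {1..N}"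
    show "0 \<le> \<alpha> \<xi> S * (sum (y \<xi>) S - (of_int (kxi C d \<xi> S) + xE x S - real (card S)))"
      if "S \<in> subsets Vp" for S
      using sri assms(2) \<xi> that unfolding SRI_hat_def inA_def by (auto intro!: mult_nonneg_nonneg)
    show "0 \<le> \<beta> \<xi> v * (y \<xi> v - real (b v))" if "v \<in> Vp" for v
      using sri assms(2) \<xi> that unfolding SRI_hat_def inA_def by (auto intro!: mult_nonpos_nonpos)
  qed
  then have "(\<Sum>\<xi>\<in>{1..N}. \<Sum>S\<in>subsets Vp. \<alpha> \<xi> S * xE x S) + nu Vp N d C b \<alpha> \<beta>
      \<le> (\<Sum>\<xi>\<in>{1..N}. \<Sum>v\<in>Vp. (\<beta> \<xi> v + (\<Sum>S\<in>{S\<in>subsets Vp. v \<in> S}. \<alpha> \<xi> S)) * y \<xi> v)"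
    using Gamma_constraint_slack[OF assms(1),
        where \<alpha> = \<alpha> and \<beta> = \<beta> and y = y and x = x and N = N and d = d and C = C and b = b]
    by linarith
  then show "(\<theta>, y) \<in> Gamma Vp N p d C w b x \<alpha> \<beta>"
    using sri unfolding SRI_hat_def Gamma_def by auto
qed

lemma affine_bound_on_unit_interval:
  fixes L D a t :: real
  assumes "L \<le> D" and "a \<le> D" and "0 \<le> t" and "t \<le> 1"
  shows "L * t \<le> D + a * (t - 1)"
proof -
  have "L * t \<le> D * t" using assms by (intro mult_right_mono)
  moreover have "a * (1 - t) \<le> D * (1 - t)" using assms by (intro mult_right_mono) auto
  ultimately show ?thesis by (simp add: algebra_simps)
qed

lemma Lstar_xi_le:
  assumes w: "\<forall>v\<in>Vp. 0 \<le> w v"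
    and y: "\<forall>v\<in>Vp. 0 \<le> y v \<and> y v \<le> real (b v)" "of_int (kxi C d \<xi> S - k') \<le> sum y S"
  shows "Lstar_xi Vp d C w b \<xi> S k' \<le> (\<Sum>v\<in>Vp. w v * y v)"
  unfolding Lstar_xi_def
proof (rule cInf_lower)
  show "(\<Sum>v\<in>Vp. w v * y v) \<in> {\<Sum>v\<in>Vp. w v * y v |y.
      of_int (kxi C d \<xi> S - k') \<le> sum y S \<and> (\<forall>v\<in>Vp. 0 \<le> y v \<and> y v \<le> real (b v))}"
    using y by blast
  show "bdd_below {\<Sum>v\<in>Vp. w v * y v |y.
      of_int (kxi C d \<xi> S - k') \<le> sum y S \<and> (\<forall>v\<in>Vp. 0 \<le> y v \<and> y v \<le> real (b v))}"
    using w by (auto intro!: bdd_belowI[of _ 0] sum_nonneg)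
qed

lemma Lstar_xi_nonneg:
  assumes w: "\<forall>v\<in>Vp. 0 \<le> w v"
    and y: "\<forall>v\<in>Vp. 0 \<le> y v \<and> y v \<le> real (b v)" "of_int (kxi C d \<xi> S - k') \<le> sum y S"
  shows "0 \<le> Lstar_xi Vp d C w b \<xi> S k'"
  unfolding Lstar_xi_def using w y by (intro cInf_greatest) (auto intro!: sum_nonneg)

lemma sum_alpha_hat:
  assumes "finite A"
  shows "(\<Sum>S'\<in>A. alpha_hat p C d w b ord S k' \<xi> S' * f S')
    = (if S \<in> A then p \<xi> * alpha_bar C d w b ord S k' \<xi> * f S else 0)"
proof -
  have "(\<Sum>S'\<in>A. alpha_hat p C d w b ord S k' \<xi> S' * f S')
      = (\<Sum>S'\<in>A. if S' = S then p \<xi> * alpha_bar C d w b ord S k' \<xi> * f S' else 0)"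
    by (rule sum.cong) (auto simp: alpha_hat_def)
  then show ?thesis by (simp add: sum.delta[OF assms])
qed

locale sorted_scenarios =
  fixes Vp :: "'v set" and N :: nat and p :: "nat \<Rightarrow> real" and d :: "nat \<Rightarrow> 'v \<Rightarrow> real"
    and C :: real and w :: "'v \<Rightarrow> real" and b :: "'v \<Rightarrow> nat" and S :: "'v set" and k' :: int
    and ord :: "nat \<Rightarrow> nat \<Rightarrow> 'v"
  assumes finite_Vp: "finite Vp"
    and S_nonempty: "S \<noteq> {}" and S_subset: "S \<subseteq> Vp"
    and w_nonneg: "\<And>v. v \<in> Vp \<Longrightarrow> 0 \<le> w v"
    and p_nonneg: "\<And>\<xi>. \<xi> \<in> {1..N} \<Longrightarrow> 0 \<le> p \<xi>"
    and residual_covered: "\<And>\<xi>. \<xi> \<in> {1..N} \<Longrightarrow> kxi C d \<xi> S - k' \<le> int (sum b S)"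
    and ord_bij: "\<And>\<xi>. \<xi> \<in> {1..N} \<Longrightarrow> bij_betw (ord \<xi>) {1..card S} S"
    and ord_sorted: "\<And>\<xi> i j. \<lbrakk>\<xi> \<in> {1..N}; 1 \<le> i; i \<le> j; j \<le> card S\<rbrakk>
      \<Longrightarrow> w (ord \<xi> i) \<le> w (ord \<xi> j)"
begin

abbreviation "residual \<xi> \<equiv> kxi C d \<xi> S - k'"
abbreviation "jstar \<xi> \<equiv> jidx C d b ord S k' \<xi>"
abbreviation "alpha \<xi> \<equiv> alpha_bar C d w b ord S k' \<xi>"
abbreviation "beta \<xi> \<equiv> beta_bar C d w b ord S k' \<xi>"

lemma finite_S: "finite S"
  using finite_Vp S_subset by (rule finite_subset[rotated])

lemma card_S_ge_1: "1 \<le> card S"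
  using finite_S S_nonempty by (simp add: Suc_le_eq card_gt_0_iff)

lemma residual_covered_ord:
  assumes "\<xi> \<in> {1..N}"
  shows "residual \<xi> \<le> (\<Sum>i\<in>{1..card S}. int (b (ord \<xi> i)))"
  using residual_covered[OF assms] sum.reindex_bij_betw[OF ord_bij[OF assms], of "\<lambda>v. int (b v)"]
  by simp

lemma jstar_threshold:
  assumes "\<xi> \<in> {1..N}"
  shows "1 \<le> jstar \<xi>" and "jstar \<xi> \<le> card S"
    and "residual \<xi> \<le> (\<Sum>i\<in>{1..jstar \<xi>}. int (b (ord \<xi> i)))"
    and "0 < residual \<xi> \<Longrightarrow> (\<Sum>i\<in>{1..<jstar \<xi>}. int (b (ord \<xi> i))) < residual \<xi>"
    and "residual \<xi> \<le> 0 \<Longrightarrow> jstar \<xi> = 1"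
  using least_prefix_covering[OF card_S_ge_1 residual_covered_ord[OF assms] jidx_def[of C d b ord S k' \<xi>]]
  by simp_all

lemma ord_jstar_in_S:
  assumes "\<xi> \<in> {1..N}"
  shows "ord \<xi> (jstar \<xi>) \<in> S"
  using bij_betwE[OF ord_bij[OF assms]] jstar_threshold(1,2)[OF assms] by simp

lemma ord_prefix_subset:
  assumes "\<xi> \<in> {1..N}"
  shows "ord \<xi> ` {1..<jstar \<xi>} \<subseteq> S"
  using bij_betw_imp_surj_on[OF ord_bij[OF assms]] jstar_threshold(2)[OF assms] by auto

lemma ord_jstar_notin_prefix:
  assumes "\<xi> \<in> {1..N}"
  shows "ord \<xi> (jstar \<xi>) \<notin> ord \<xi> ` {1..<jstar \<xi>}"
  using bij_betw_imp_inj_on[OF ord_bij[OF assms]] jstar_threshold(1,2)[OF assms]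
  by (subst inj_on_image_mem_iff) auto

lemma weight_jstar_nonneg:
  assumes "\<xi> \<in> {1..N}"
  shows "0 \<le> w (ord \<xi> (jstar \<xi>))"
  using w_nonneg ord_jstar_in_S[OF assms] S_subset by blast

lemma alpha_nonneg:
  assumes "\<xi> \<in> {1..N}"
  shows "0 \<le> alpha \<xi>"
  using weight_jstar_nonneg[OF assms] by (simp add: alpha_bar_def)

lemma alpha_le_weight_jstar:
  assumes "\<xi> \<in> {1..N}"
  shows "alpha \<xi> \<le> w (ord \<xi> (jstar \<xi>))"
  using weight_jstar_nonneg[OF assms] by (simp add: alpha_bar_def)

lemma beta_nonpos:
  assumes "\<xi> \<in> {1..N}"
  shows "beta \<xi> v \<le> 0"
  using ord_sorted[OF assms] jstar_threshold(2)[OF assms] by (auto simp: beta_bar_def)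

lemma beta_outside:
  assumes "\<xi> \<in> {1..N}" and "v \<notin> S"
  shows "beta \<xi> v = 0"
  using ord_prefix_subset[OF assms(1)] assms(2) by (auto simp: beta_bar_def)

lemma beta_add_alpha_le:
  assumes \<xi>: "\<xi> \<in> {1..N}" and v: "v \<in> S"
  shows "beta \<xi> v + alpha \<xi> \<le> w v"
proof -
  note alpha_le = alpha_le_weight_jstar[OF \<xi>]
  show ?thesis
  proof (cases "v \<in> ord \<xi> ` {1..<jstar \<xi>}")
    case False
    obtain i where i: "i \<in> {1..card S}" "v = ord \<xi> i"
      using bij_betw_imp_surj_on[OF ord_bij[OF \<xi>]] v by (metis imageE)
    with False have "jstar \<xi> \<le> i" by auto
    then have "w (ord \<xi> (jstar \<xi>)) \<le> w v"
      using ord_sorted[OF \<xi>] jstar_threshold(1)[OF \<xi>] i by auto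
    with False alpha_le show ?thesis by (simp add: beta_bar_def)
  qed (use alpha_le in \<open>simp add: beta_bar_def\<close>)
qed

definition greedy_fill :: "nat \<Rightarrow> real \<Rightarrow> 'v \<Rightarrow> real" where
  "greedy_fill \<xi> r v =
    (if v \<in> ord \<xi> ` {1..<jstar \<xi>} then real (b v) else if v = ord \<xi> (jstar \<xi>) then r else 0)"

lemma sum_greedy_fill:
  assumes \<xi>: "\<xi> \<in> {1..N}"
  shows "sum (greedy_fill \<xi> r) S = (\<Sum>i\<in>{1..<jstar \<xi>}. real (b (ord \<xi> i))) + r"
proof -
  let ?P = "ord \<xi> ` {1..<jstar \<xi>}" and ?v = "ord \<xi> (jstar \<xi>)"
  have "{1..<jstar \<xi>} \<subseteq> {1..card S}" using jstar_threshold(2)[OF \<xi>] by auto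
  then have inj: "inj_on (ord \<xi>) {1..<jstar \<xi>}"
    by (rule inj_on_subset[OF bij_betw_imp_inj_on[OF ord_bij[OF \<xi>]]])
  have "sum (greedy_fill \<xi> r) S = sum (greedy_fill \<xi> r) (insert ?v ?P)"
    using ord_prefix_subset[OF \<xi>] ord_jstar_in_S[OF \<xi>]
    by (intro sum.mono_neutral_right[OF finite_S]) (auto simp: greedy_fill_def)
  also have "\<dots> = r + sum (greedy_fill \<xi> r) ?P"
    using ord_jstar_notin_prefix[OF \<xi>] by (simp add: greedy_fill_def)
  also have "sum (greedy_fill \<xi> r) ?P = (\<Sum>v\<in>?P. real (b v))"
    by (rule sum.cong) (auto simp: greedy_fill_def)
  also have "\<dots> = (\<Sum>i\<in>{1..<jstar \<xi>}. real (b (ord \<xi> i)))"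
    by (simp only: sum.reindex[OF inj] comp_def)
  finally show ?thesis by simp
qed

lemma greedy_fill_objective:
  assumes \<xi>: "\<xi> \<in> {1..N}"
  shows "(\<Sum>v\<in>Vp. w v * greedy_fill \<xi> r v)
    = w (ord \<xi> (jstar \<xi>)) * sum (greedy_fill \<xi> r) S + (\<Sum>v\<in>Vp. beta \<xi> v * real (b v))"
proof -
  \<comment> \<open>complementary slackness, one customer at a time\<close>
  have pointwise: "w v * greedy_fill \<xi> r v
      = w (ord \<xi> (jstar \<xi>)) * (if v \<in> S then greedy_fill \<xi> r v else 0) + beta \<xi> v * real (b v)"
    for v
    using ord_prefix_subset[OF \<xi>] ord_jstar_in_S[OF \<xi>] ord_jstar_notin_prefix[OF \<xi>]
    by (auto simp: greedy_fill_def beta_bar_def algebra_simps)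
  have restrict: "(\<Sum>v\<in>Vp. if v \<in> S then greedy_fill \<xi> r v else 0) = sum (greedy_fill \<xi> r) S"
    using S_subset by (simp add: sum.inter_restrict[OF finite_Vp, symmetric] Int_absorb1)
  show ?thesis
    by (simp only: pointwise sum.distrib sum_distrib_left[symmetric] restrict)
qed

lemma greedy_cover:
  assumes \<xi>: "\<xi> \<in> {1..N}"
  obtains y where "\<forall>v\<in>Vp. 0 \<le> y v \<and> y v \<le> real (b v)"
    and "of_int (residual \<xi>) \<le> sum y S"
    and "(\<Sum>v\<in>Vp. w v * y v) = alpha \<xi> * of_int (residual \<xi>) + (\<Sum>v\<in>Vp. beta \<xi> v * real (b v))"
    and "alpha \<xi> \<le> (\<Sum>v\<in>Vp. w v * y v)"
proof (cases "0 < residual \<xi>")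
  case True
  define r where "r = residual \<xi> - (\<Sum>i\<in>{1..<jstar \<xi>}. int (b (ord \<xi> i)))"
  let ?y = "greedy_fill \<xi> (of_int r)" and ?v = "ord \<xi> (jstar \<xi>)"
  have r_pos: "1 \<le> r" using jstar_threshold(4)[OF \<xi> True] by (simp add: r_def)
  have "(\<Sum>i\<in>{1..jstar \<xi>}. int (b (ord \<xi> i)))
      = (\<Sum>i\<in>{1..<jstar \<xi>}. int (b (ord \<xi> i))) + int (b ?v)"
    using jstar_threshold(1)[OF \<xi>] by (simp add: atLeastLessThanSuc_atLeastAtMost[symmetric])
  then have r_le: "r \<le> int (b ?v)" using jstar_threshold(3)[OF \<xi>] by (simp add: r_def)
  have bounds: "\<forall>v\<in>Vp. 0 \<le> ?y v \<and> ?y v \<le> real (b v)"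
    using r_pos r_le by (auto simp: greedy_fill_def)
  have sum_y: "sum ?y S = of_int (residual \<xi>)"
    by (simp add: sum_greedy_fill[OF \<xi>] r_def)
  have alpha: "alpha \<xi> = w ?v" using True by (simp add: alpha_bar_def)
  have "alpha \<xi> \<le> w ?v * ?y ?v"
    using alpha r_pos weight_jstar_nonneg[OF \<xi>] ord_jstar_notin_prefix[OF \<xi>]
    by (simp add: greedy_fill_def mult_le_cancel_left1)
  also have "\<dots> \<le> (\<Sum>v\<in>Vp. w v * ?y v)"
    using bounds w_nonneg ord_jstar_in_S[OF \<xi>] S_subset
    by (intro member_le_sum[OF _ _ finite_Vp]) auto
  finally show ?thesis
    using that[OF bounds] sum_y alpha greedy_fill_objective[OF \<xi>] by simp
next
  case False
  then have "alpha \<xi> = 0" and "\<And>v. beta \<xi> v = 0"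
    using jstar_threshold(5)[OF \<xi>] by (simp_all add: alpha_bar_def beta_bar_def)
  then show ?thesis
    using that[of "\<lambda>_. 0"] False by simp
qed

lemma scenario_bound:
  assumes \<xi>: "\<xi> \<in> {1..N}"
    and t: "0 \<le> 1 + s - real (card S) + of_int k'" "s \<le> real (card S) - of_int k'"
    and y: "\<forall>v\<in>Vp. 0 \<le> y v \<and> y v \<le> real (b v)"
  shows "Lstar_xi Vp d C w b \<xi> S k' * (1 + s - real (card S) + of_int k')
    \<le> (\<Sum>v\<in>S. w v * y v)
      - (alpha \<xi> * (sum y S - (of_int (kxi C d \<xi> S) + s - real (card S)))
         + (\<Sum>v\<in>Vp. beta \<xi> v * (y v - real (b v))))"
proof -
  define t where "t = 1 + s - real (card S) + of_int k'"
  define D where "D = alpha \<xi> * of_int (residual \<xi>) + (\<Sum>v\<in>Vp. beta \<xi> v * real (b v))"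
  define L where "L = Lstar_xi Vp d C w b \<xi> S k'"
  obtain z where z: "\<forall>v\<in>Vp. 0 \<le> z v \<and> z v \<le> real (b v)" "of_int (residual \<xi>) \<le> sum z S"
    and z_value: "(\<Sum>v\<in>Vp. w v * z v) = D" and alpha_le: "alpha \<xi> \<le> (\<Sum>v\<in>Vp. w v * z v)"
    unfolding D_def by (rule greedy_cover[OF \<xi>])
  have "L \<le> D" unfolding L_def z_value[symmetric]
    using Lstar_xi_le[of Vp w z b C d \<xi> S k'] w_nonneg z by simp
  moreover have "alpha \<xi> \<le> D" using alpha_le z_value by simp
  moreover have "0 \<le> t" and "t \<le> 1" using t unfolding t_def by simp_all
  ultimately have interpolate: "L * t \<le> D + alpha \<xi> * (t - 1)"
    by (rule affine_bound_on_unit_interval)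
  have "(\<Sum>v\<in>Vp. beta \<xi> v * y v) + alpha \<xi> * sum y S
      = (\<Sum>v\<in>S. beta \<xi> v * y v) + alpha \<xi> * sum y S"
    using beta_outside[OF \<xi>] by (subst sum.mono_neutral_right[OF finite_Vp S_subset]) auto
  also have "\<dots> = (\<Sum>v\<in>S. (beta \<xi> v + alpha \<xi>) * y v)"
    by (simp add: distrib_right sum.distrib sum_distrib_left)
  also have "\<dots> \<le> (\<Sum>v\<in>S. w v * y v)"
    using beta_add_alpha_le[OF \<xi>] y S_subset by (intro sum_mono mult_right_mono) auto
  finally have "(\<Sum>v\<in>Vp. beta \<xi> v * y v) + alpha \<xi> * sum y S \<le> (\<Sum>v\<in>S. w v * y v)" .
  moreover have "(\<Sum>v\<in>Vp. beta \<xi> v * (y v - real (b v)))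
      = (\<Sum>v\<in>Vp. beta \<xi> v * y v) - (\<Sum>v\<in>Vp. beta \<xi> v * real (b v))"
    by (simp add: right_diff_distrib sum_subtractf)
  moreover have "alpha \<xi> * (sum y S - (of_int (kxi C d \<xi> S) + s - real (card S)))
      = alpha \<xi> * sum y S - alpha \<xi> * of_int (residual \<xi>) - alpha \<xi> * (t - 1)"
    unfolding t_def of_int_diff by (simp add: right_diff_distrib distrib_left)
  ultimately show ?thesis
    using interpolate unfolding L_def t_def[symmetric] D_def by linarith
qed

lemma S_in_subsets: "S \<in> subsets Vp"
  using S_nonempty S_subset by (simp add: subsets_def)

lemma Gamma_slack_alpha_beta_hat:
  "(\<Sum>\<xi>\<in>{1..N}. \<Sum>v\<in>Vp. (beta_hat p C d w b ord S k' \<xi> v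
        + (\<Sum>S'\<in>{S'\<in>subsets Vp. v \<in> S'}. alpha_hat p C d w b ord S k' \<xi> S')) * y \<xi> v)
    - ((\<Sum>\<xi>\<in>{1..N}. \<Sum>S'\<in>subsets Vp. alpha_hat p C d w b ord S k' \<xi> S' * xE x S')
       + nu Vp N d C b (alpha_hat p C d w b ord S k') (beta_hat p C d w b ord S k'))
  = (\<Sum>\<xi>\<in>{1..N}. p \<xi> * (alpha \<xi> * (sum (y \<xi>) S - (of_int (kxi C d \<xi> S) + xE x S - real (card S)))
        + (\<Sum>v\<in>Vp. beta \<xi> v * (y \<xi> v - real (b v)))))"
  unfolding Gamma_constraint_slack[OF finite_Vp]
  by (simp add: sum_alpha_hat[OF finite_subsets[OF finite_Vp]] S_in_subsets beta_hat_def
      sum_distrib_left distrib_left mult.assoc)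

lemma multipliers_in_A:
  "inA Vp N w (alpha_hat p C d w b ord S k') (beta_hat p C d w b ord S k')"
  unfolding inA_def
proof (intro conjI ballI impI)
  fix \<xi> assume \<xi>: "\<xi> \<in> {1..N}"
  show "0 \<le> alpha_hat p C d w b ord S k' \<xi> S'" for S'
    using p_nonneg[OF \<xi>] alpha_nonneg[OF \<xi>] by (simp add: alpha_hat_def)
  show "beta_hat p C d w b ord S k' \<xi> v \<le> 0" for v
    using p_nonneg[OF \<xi>] beta_nonpos[OF \<xi>] by (simp add: beta_hat_def mult_nonneg_nonpos)
  fix v assume "v \<in> Vp" and "w v = 0"
  then have "beta \<xi> v + (if v \<in> S then alpha \<xi> else 0) \<le> 0"
    using beta_add_alpha_le[OF \<xi>] beta_nonpos[OF \<xi>] by fastforce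
  with p_nonneg[OF \<xi>] show "beta_hat p C d w b ord S k' \<xi> v
      + (\<Sum>S'\<in>{S'\<in>subsets Vp. v \<in> S'}. alpha_hat p C d w b ord S k' \<xi> S') \<le> 0"
    using sum_alpha_hat[of "{S'\<in>subsets Vp. v \<in> S'}" p C d w b ord S k' \<xi> "\<lambda>_. 1"]
      finite_subsets[OF finite_Vp] S_in_subsets
    by (auto simp: beta_hat_def distrib_left[symmetric] intro: mult_nonneg_nonpos split: if_splits)
qed

lemma Lstar_nonneg: "0 \<le> Lstar Vp N p d C w b S k'"
  unfolding Lstar_def
proof (intro sum_nonneg mult_nonneg_nonneg)
  fix \<xi> assume \<xi>: "\<xi> \<in> {1..N}"
  show "0 \<le> p \<xi>" by (rule p_nonneg[OF \<xi>])
  obtain y where "\<forall>v\<in>Vp. 0 \<le> y v \<and> y v \<le> real (b v)" "of_int (residual \<xi>) \<le> sum y S"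
    using greedy_cover[OF \<xi>] by metis
  then show "0 \<le> Lstar_xi Vp d C w b \<xi> S k'"
    using w_nonneg by (intro Lstar_xi_nonneg) auto
qed

lemma proj_Gamma_bound:
  assumes x: "xE x S \<le> real (card S) - of_int k'"
    and \<theta>: "\<theta> \<in> proj_theta (Gamma Vp N p d C w b x
                (alpha_hat p C d w b ord S k') (beta_hat p C d w b ord S k'))"
  shows "Lstar Vp N p d C w b S k' * (1 + xE x S - real (card S) + of_int k') \<le> sum \<theta> S"
proof -
  define t where "t = 1 + xE x S - real (card S) + of_int k'"
  obtain y where y: "(\<theta>, y) \<in> Gamma Vp N p d C w b x
      (alpha_hat p C d w b ord S k') (beta_hat p C d w b ord S k')"
    using \<theta> unfolding proj_theta_def by blast
  define slack where "slack \<xi> = alpha \<xi> * (sum (y \<xi>) S - (of_int (kxi C d \<xi> S) + xE x S - real (card S)))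
      + (\<Sum>v\<in>Vp. beta \<xi> v * (y \<xi> v - real (b v)))" for \<xi>
  have y_bounds: "\<forall>v\<in>Vp. 0 \<le> y \<xi> v \<and> y \<xi> v \<le> real (b v)" if "\<xi> \<in> {1..N}" for \<xi>
    using y that unfolding Gamma_def by blast
  have slack_nonneg: "0 \<le> (\<Sum>\<xi>\<in>{1..N}. p \<xi> * slack \<xi>)"
    using y Gamma_slack_alpha_beta_hat[of y x] unfolding Gamma_def slack_def by auto
  have "(\<Sum>\<xi>\<in>{1..N}. p \<xi> * (\<Sum>v\<in>S. w v * y \<xi> v)) = (\<Sum>v\<in>S. \<Sum>\<xi>\<in>{1..N}. p \<xi> * w v * y \<xi> v)"
    by (subst sum.swap) (simp add: sum_distrib_left mult.assoc)
  also have "\<dots> \<le> sum \<theta> S"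
    using y S_subset unfolding Gamma_def by (intro sum_mono) auto
  finally have theta_ge: "(\<Sum>\<xi>\<in>{1..N}. p \<xi> * (\<Sum>v\<in>S. w v * y \<xi> v)) \<le> sum \<theta> S" .
  show ?thesis
  proof (cases "0 \<le> t")
    case True
    have "Lstar Vp N p d C w b S k' * t = (\<Sum>\<xi>\<in>{1..N}. p \<xi> * (Lstar_xi Vp d C w b \<xi> S k' * t))"
      by (simp add: Lstar_def sum_distrib_right mult.assoc)
    also have "\<dots> \<le> (\<Sum>\<xi>\<in>{1..N}. p \<xi> * ((\<Sum>v\<in>S. w v * y \<xi> v) - slack \<xi>))"
      using scenario_bound[OF _ True[unfolded t_def] x y_bounds] p_nonneg
      by (intro sum_mono mult_left_mono) (auto simp: slack_def t_def)
    also have "\<dots> \<le> (\<Sum>\<xi>\<in>{1..N}. p \<xi> * (\<Sum>v\<in>S. w v * y \<xi> v))"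
      using slack_nonneg by (simp add: right_diff_distrib sum_subtractf)
    finally show ?thesis using theta_ge by (simp add: t_def)
  next
    case False
    have "0 \<le> sum \<theta> S" using y S_subset unfolding Gamma_def by (intro sum_nonneg) auto
    moreover have "Lstar Vp N p d C w b S k' * t \<le> 0"
      using Lstar_nonneg False by (simp add: mult_nonneg_nonpos)
    ultimately show ?thesis by (simp add: t_def)
  qed
qed

end

theorem theorem4:
  fixes dep :: 'v and Vp :: "'v set" and N :: nat and p :: "nat \<Rightarrow> real"
    and d :: "nat \<Rightarrow> 'v \<Rightarrow> real" and C :: real and X :: "('v set \<Rightarrow> real) set"
    and w :: "'v \<Rightarrow> real" and b :: "'v \<Rightarrow> nat" and S :: "'v set" and k' :: int
    and ord :: "nat \<Rightarrow> nat \<Rightarrow> 'v"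
  assumes fin: "finite Vp" and dep: "dep \<notin> Vp"
    and C: "C > 0" "C \<in> \<rat>"
    and d: "\<forall>\<xi>\<in>{1..N}. \<forall>v\<in>Vp. 0 \<le> d \<xi> v \<and> d \<xi> v \<le> C \<and> d \<xi> v \<in> \<rat>"
    and p: "\<forall>\<xi>\<in>{1..N}. 0 \<le> p \<xi>" "(\<Sum>\<xi>\<in>{1..N}. p \<xi>) = 1"
    and X: "X = X_sub dep Vp \<or> (\<exists>k::nat. k > 0 \<and> X = X_cvrp dep Vp N p d C k)"
    and w: "\<forall>v\<in>Vp. 0 \<le> w v \<and> w v \<in> \<rat>"
    and S: "S \<noteq> {}" "S \<subseteq> Vp"
    and k': "k' > 0"
    and hyp: "\<forall>\<xi>\<in>{1..N}. kxi C d \<xi> S - k' \<le> int (sum b S)"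
    and ord: "\<forall>\<xi>\<in>{1..N}. bij_betw (ord \<xi>) {1..card S} S
               \<and> (\<forall>i j. 1 \<le> i \<longrightarrow> i \<le> j \<longrightarrow> j \<le> card S \<longrightarrow> w (ord \<xi> i) \<le> w (ord \<xi> j))"
  shows "inA Vp N w (alpha_hat p C d w b ord S k') (beta_hat p C d w b ord S k')
    \<and> (\<forall>xbar\<in>X. xE xbar S \<le> real (card S) - of_int k' \<longrightarrow>
         (\<forall>\<theta>\<in>proj_theta (Gamma Vp N p d C w b xbar (alpha_hat p C d w b ord S k') (beta_hat p C d w b ord S k')).
            sum \<theta> S \<ge> Lstar Vp N p d C w b S k' * (1 + xE xbar S - real (card S) + of_int k')))
    \<and> ((\<forall>(x, \<theta>)\<in>Pset X Vp N p d C w b. xE x S \<le> real (card S) - of_int k') \<longrightarrow>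
       (\<forall>(x, \<theta>)\<in>Pset X Vp N p d C w b.
            sum \<theta> S \<ge> Lstar Vp N p d C w b S k' * (1 + xE x S - real (card S) + of_int k')))"
proof -
  interpret sorted_scenarios Vp N p d C w b S k' ord
    using fin S p(1) w hyp ord by unfold_locales auto
  have SRI_in_Gamma: "proj_theta (SRI_hat Vp N p d C w b x)
      \<subseteq> proj_theta (Gamma Vp N p d C w b x (alpha_hat p C d w b ord S k') (beta_hat p C d w b ord S k'))"
    for x
    using SRI_hat_subset_Gamma[OF fin multipliers_in_A] unfolding proj_theta_def by blast
  show ?thesis
    using multipliers_in_A proj_Gamma_bound SRI_in_Gamma
    unfolding Pset_def by (fastforce simp: case_prod_beta)
qed

end
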